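(* Let $d\ge3$ and $\gamma\in\mathcal{P}_{\mathcal{W}_d}$. Then there exist a sequence $(\gamma_n^1)$ of discrete measures in $\mathcal{P}_{\mathcal{W}_d}$, a sequence $(\gamma_n^2)$ of singular measures without point masses in $\mathcal{P}_{\mathcal{W}_d}$, and a sequence $(\gamma_n^3)$ of absolutely continuous measures in $\mathcal{P}_{\mathcal{W}_d}$, each of which converges weakly to $\gamma$ on $[0,\infty)$.
   Context: $\mathcal{P}_{\mathcal{W}_d}$ is the set of probability measures $\gamma$ on $\mathcal{B}([0,\infty))$ with $\gamma(\{0\})=0$ and $\int_{[0,1]}(1-t)^{d-1}\,d\gamma(t)=1/2$. Singular and absolutely continuous are with respect to Lebesgue measure. *)

theory Defs
  imports "HOL-Probability.Probability"
begin

text \<open>Probability measures on the Borel sets of [0,oo), represented as Borel probability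
  measures on the real line carried by [0,oo).\<close>
definition prob_on_halfline :: "real measure \<Rightarrow> bool" where
  "prob_on_halfline M \<longleftrightarrow> prob_space M \<and> sets M = sets borel \<and> emeasure M {..<0} = 0"

definition PW :: "nat \<Rightarrow> real measure set" where
  "PW d = {M. prob_on_halfline M \<and> emeasure M {0} = 0 \<and>
              (LINT t:{0..1}|M. (1 - t) ^ (d - 1)) = 1 / 2}"

definition weak_conv_halfline :: "(nat \<Rightarrow> real measure) \<Rightarrow> real measure \<Rightarrow> bool" where
  "weak_conv_halfline Ms M \<longleftrightarrow>
     (\<forall>f :: real \<Rightarrow> real. continuous_on {0..} f \<and> bounded (f ` {0..}) \<longrightarrow>
        (\<lambda>n. integral\<^sup>L (Ms n) f) \<longlonglongrightarrow> integral\<^sup>L M f)"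

definition discrete_measure :: "real measure \<Rightarrow> bool" where
  "discrete_measure M \<longleftrightarrow> (\<exists>A. countable A \<and> A \<in> sets M \<and> emeasure M (space M - A) = 0)"

definition singular_measure :: "real measure \<Rightarrow> bool" where
  "singular_measure M \<longleftrightarrow> (\<exists>N \<in> sets borel. emeasure lborel N = 0 \<and> emeasure M (space M - N) = 0)"

definition no_atoms :: "real measure \<Rightarrow> bool" where
  "no_atoms M \<longleftrightarrow> (\<forall>x. emeasure M {x} = 0)"

definition abs_cont_measure :: "real measure \<Rightarrow> bool" where
  "abs_cont_measure M \<longleftrightarrow> absolutely_continuous lborel M"

end

theory Submission
  imports Defs
begin

text \<open>The law of \<open>\<lceil>mT\<rceil>/m + U/m\<close>, where \<open>T \<sim> \<gamma>\<close> and \<open>U\<close> is an independent noise in \<open>[0,1]\<close>,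
  converges weakly to \<open>\<gamma>\<close> as \<open>m \<rightarrow> \<infinity>\<close>, lives on \<open>(0,\<infinity>)\<close> because \<open>T > 0\<close> a.s., and inherits
  the type of the law of \<open>U\<close> from the countably many affine maps involved: it is discrete for
  \<open>U = 0\<close>, singular without atoms for \<open>U\<close> Cantor distributed, and absolutely continuous for
  \<open>U\<close> uniform. For \<open>d \<ge> 2\<close> the constraint integrand \<open>(1 - t)^(d-1)\<close> on \<open>[0,1]\<close>, extended by \<open>0\<close>,
  is bounded and continuous on \<open>[0,\<infinity>)\<close>, so its integral against these laws tends to \<open>1/2\<close>.
  The constraint is then restored exactly by mixing in, with a weight tending to \<open>0\<close>, an affine
  image of the law of \<open>U\<close> placed where the integrand vanishes or where it exceeds \<open>1/2\<close>.\<close>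

lemma sets_vimage_borel: "f \<in> borel_measurable borel \<Longrightarrow> A \<in> sets borel \<Longrightarrow> f -` A \<in> sets borel"
  using measurable_sets_borel[of f borel A] by simp

lemma sets_affine_vimage [measurable]:
  fixes A :: "real set"
  assumes "A \<in> sets borel"
  shows "(\<lambda>x. t + c * x) -` A \<in> sets borel"
  using assms by (intro sets_vimage_borel) simp_all

lemma emeasure_lborel_affine_vimage:
  fixes A :: "real set"
  assumes [measurable]: "A \<in> sets borel" and c: "c \<noteq> 0"
  shows "emeasure lborel A = ennreal \<bar>c\<bar> * emeasure lborel ((\<lambda>x. t + c * x) -` A)"
proof -
  have "emeasure lborel A = (\<integral>\<^sup>+x. indicator A x \<partial>lborel)" by simp
  also have "\<dots> = \<bar>c\<bar> * (\<integral>\<^sup>+x. indicator A (t + c * x) \<partial>lborel)"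
    by (rule nn_integral_real_affine) (use c in auto)
  also have "(\<lambda>x. indicator A (t + c * x)) = indicator ((\<lambda>x. t + c * x) -` A)"
    by (auto simp: indicator_def)
  finally show ?thesis by simp
qed

lemma affine_vimage_null_sets:
  fixes N :: "real set"
  assumes N: "N \<in> null_sets lborel" and c: "c \<noteq> 0"
  shows "(\<lambda>x. t + c * x) -` N \<in> null_sets lborel"
proof -
  have [measurable]: "N \<in> sets borel" using N by auto
  have "emeasure lborel ((\<lambda>x. t + c * x) -` N) = 0"
    using emeasure_lborel_affine_vimage[of N c t] null_setsD1[OF N] c by (simp add: ennreal_eq_0_iff)
  then show ?thesis by auto
qed

lemma measure_lborel_affine_vimage:
  fixes A :: "real set"
  assumes "A \<in> sets borel" and "c \<noteq> 0"
  shows "measure lborel ((\<lambda>x. t + c * x) -` A) = measure lborel A / \<bar>c\<bar>"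
  using emeasure_lborel_affine_vimage[OF assms, of t] assms(2)
  by (simp add: measure_def enn2real_mult)

subsection \<open>The Cantor function\<close>

definition binary_digit :: "nat \<Rightarrow> real \<Rightarrow> real" where
  "binary_digit i x = of_int (\<lfloor>2 ^ Suc i * x\<rfloor> - 2 * \<lfloor>2 ^ i * x\<rfloor>)"

text \<open>The binary digits of \<open>x\<close>, read as ternary digits \<open>0\<close> and \<open>2\<close>.\<close>
definition cantor_fun :: "real \<Rightarrow> real" where
  "cantor_fun x = (\<Sum>i. 2 * binary_digit i x / 3 ^ Suc i)"

lemma floor_double_minus_double_floor: "\<lfloor>2 * z\<rfloor> - 2 * \<lfloor>z\<rfloor> \<in> {0, 1::int}" for z :: real
proof -
  have "2 * \<lfloor>z\<rfloor> \<le> \<lfloor>2 * z\<rfloor>"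
    unfolding le_floor_iff by linarith
  moreover have "\<lfloor>2 * z\<rfloor> < 2 * \<lfloor>z\<rfloor> + 2"
    unfolding floor_less_iff by linarith
  ultimately show ?thesis by auto
qed

lemma binary_digit_cases: "binary_digit i x = 0 \<or> binary_digit i x = 1"
proof -
  have "binary_digit i x = of_int (\<lfloor>2 * (2 ^ i * x)\<rfloor> - 2 * \<lfloor>2 ^ i * x\<rfloor>)"
    by (simp add: binary_digit_def mult.assoc)
  with floor_double_minus_double_floor[of "2 ^ i * x"] show ?thesis by auto
qed

lemma binary_digit_nonneg: "0 \<le> binary_digit i x"
  and binary_digit_le_1: "binary_digit i x \<le> 1"
  using binary_digit_cases[of i x] by auto

lemma binary_digit_Suc: "binary_digit (Suc i) x = binary_digit i (2 * x)"
  unfolding binary_digit_def by (simp add: mult.assoc mult.left_commute)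

lemma sums_two_div_three_pow: "(\<lambda>i. 2 / 3 ^ Suc i) sums (1::real)"
  using sums_mult[OF geometric_sums[of "1/3::real"], of "2/3"]
  by (simp add: power_one_over)

lemma summable_cantor_series: "summable (\<lambda>i. 2 * binary_digit i x / 3 ^ Suc i)"
proof (rule summable_comparison_test')
  show "summable (\<lambda>i. 2 / (3::real) ^ Suc i)"
    using sums_two_div_three_pow by (rule sums_summable)
  show "norm (2 * binary_digit i x / 3 ^ Suc i) \<le> 2 / 3 ^ Suc i" for i
    by (simp add: binary_digit_nonneg binary_digit_le_1 divide_right_mono)
qed

lemma cantor_fun_nonneg: "0 \<le> cantor_fun x"
  unfolding cantor_fun_def
  by (rule suminf_nonneg[OF summable_cantor_series]) (simp add: binary_digit_nonneg)

lemma cantor_fun_le_1: "cantor_fun x \<le> 1"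
proof -
  have "cantor_fun x \<le> (\<Sum>i. 2 / 3 ^ Suc i)"
    unfolding cantor_fun_def
    using summable_cantor_series sums_summable[OF sums_two_div_three_pow]
    by (intro suminf_le) (simp_all add: binary_digit_le_1 divide_right_mono)
  then show ?thesis using sums_two_div_three_pow by (simp add: sums_iff)
qed

lemma cantor_fun_rec: "cantor_fun x = 2 * binary_digit 0 x / 3 + cantor_fun (2 * x) / 3"
proof -
  have "cantor_fun x = (\<Sum>i. 2 * binary_digit (Suc i) x / 3 ^ Suc (Suc i)) + 2 * binary_digit 0 x / 3"
    unfolding cantor_fun_def using suminf_split_head[OF summable_cantor_series[of x]] by simp
  also have "(\<Sum>i. 2 * binary_digit (Suc i) x / 3 ^ Suc (Suc i)) = cantor_fun (2 * x) / 3"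
    unfolding cantor_fun_def binary_digit_Suc
    using suminf_divide[OF summable_cantor_series[of "2 * x"], of 3] by (simp add: ac_simps)
  finally show ?thesis by simp
qed

lemma borel_measurable_cantor_fun [measurable]: "cantor_fun \<in> borel_measurable borel"
proof (rule borel_measurable_LIMSEQ_real)
  show "(\<lambda>n. \<Sum>i<n. 2 * binary_digit i x / 3 ^ Suc i) \<longlonglongrightarrow> cantor_fun x" for x
    unfolding cantor_fun_def using summable_LIMSEQ[OF summable_cantor_series] .
  show "(\<lambda>x. \<Sum>i<n. 2 * binary_digit i x / 3 ^ Suc i) \<in> borel_measurable borel" for n
    unfolding binary_digit_def by measurable
qed

lemma binary_digit_0_eq_if_cantor_fun_eq:
  assumes "cantor_fun x = cantor_fun y"
  shows "binary_digit 0 x = binary_digit 0 y"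
proof -
  have low: "cantor_fun z \<le> 1/3" if "binary_digit 0 z = 0" for z
    using cantor_fun_rec[of z] cantor_fun_le_1[of "2 * z"] that by simp
  have high: "2/3 \<le> cantor_fun z" if "binary_digit 0 z = 1" for z
    using cantor_fun_rec[of z] cantor_fun_nonneg[of "2 * z"] that by simp
  show ?thesis
  proof (cases "binary_digit 0 x = 0")
    case True
    then have "cantor_fun y \<le> 1/3" using low[of x] assms by simp
    then have "binary_digit 0 y = 0" using binary_digit_cases[of 0 y] high[of y] by auto
    with True show ?thesis by simp
  next
    case False
    then have x: "binary_digit 0 x = 1" using binary_digit_cases[of 0 x] by simp
    then have "2/3 \<le> cantor_fun y" using high[of x] assms by simp
    then have "binary_digit 0 y = 1" using binary_digit_cases[of 0 y] low[of y] by auto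
    with x show ?thesis by simp
  qed
qed

lemma binary_digit_eq_if_cantor_fun_eq:
  "cantor_fun x = cantor_fun y \<Longrightarrow> binary_digit i x = binary_digit i y"
proof (induction i arbitrary: x y)
  case 0
  then show ?case by (rule binary_digit_0_eq_if_cantor_fun_eq)
next
  case (Suc i)
  have "cantor_fun (2 * x) = cantor_fun (2 * y)"
    using Suc.prems binary_digit_0_eq_if_cantor_fun_eq[OF Suc.prems] cantor_fun_rec[of x] cantor_fun_rec[of y]
    by linarith
  then show ?case unfolding binary_digit_Suc by (rule Suc.IH)
qed

lemma floor_pow2_eq_if_cantor_fun_eq:
  assumes "x \<in> {0..<1}" "y \<in> {0..<1}" "cantor_fun x = cantor_fun y"
  shows "\<lfloor>2 ^ i * x\<rfloor> = \<lfloor>2 ^ i * y\<rfloor>"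
proof (induction i)
  case 0
  have "\<lfloor>x\<rfloor> = 0" "\<lfloor>y\<rfloor> = 0"
    using assms by (simp_all add: floor_eq_iff)
  then show ?case by simp
next
  case (Suc i)
  have "\<lfloor>2 ^ Suc i * z\<rfloor> = binary_digit i z + 2 * \<lfloor>2 ^ i * z\<rfloor>" for z :: real
    by (simp add: binary_digit_def)
  then show ?case
    using Suc.IH binary_digit_eq_if_cantor_fun_eq[OF assms(3), of i] by (metis of_int_eq_iff)
qed

lemma inj_on_cantor_fun: "inj_on cantor_fun {0..<1}"
proof (rule inj_onI)
  fix x y assume x: "x \<in> {0..<1}" and y: "y \<in> {0..<1}" and eq: "cantor_fun x = cantor_fun y"
  note floor_eq = floor_pow2_eq_if_cantor_fun_eq[OF x y eq]
  have close: "\<bar>x - y\<bar> < (1/2) ^ i" for i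
  proof -
    have "\<bar>2 ^ i * x - 2 ^ i * y\<bar> < (1::real)"
      using floor_eq[of i] floor_correct[of "2 ^ i * x"] floor_correct[of "2 ^ i * y"] by linarith
    moreover have "\<bar>2 ^ i * x - 2 ^ i * y\<bar> = 2 ^ i * \<bar>x - y\<bar>"
      by (simp add: abs_mult flip: right_diff_distrib)
    ultimately show ?thesis
      by (simp add: power_one_over less_divide_eq mult.commute)
  qed
  show "x = y"
  proof (rule ccontr)
    assume "x \<noteq> y"
    then obtain i where "(1/2) ^ i < \<bar>x - y\<bar>"
      using real_arch_pow_inv[of "\<bar>x - y\<bar>" "1/2"] by auto
    with close[of i] show False by simp
  qed
qed

text \<open>The redundant \<open>0 +\<close> keeps both maps in the shape \<open>\<lambda>x. t + c * x\<close> of the lemmas above.\<close>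
fun cantor_stage :: "nat \<Rightarrow> real set" where
  "cantor_stage 0 = {0..1}"
| "cantor_stage (Suc k) = (\<lambda>y. 0 + 3 * y) -` cantor_stage k \<union> (\<lambda>y. -2 + 3 * y) -` cantor_stage k"

definition cantor_set :: "real set" where
  "cantor_set = (\<Inter>k. cantor_stage k)"

lemma sets_cantor_stage [measurable]: "cantor_stage k \<in> sets borel"
  by (induction k) (simp_all only: cantor_stage.simps sets.Un sets_affine_vimage, simp)

lemma sets_cantor_set [measurable]: "cantor_set \<in> sets borel"
  unfolding cantor_set_def by measurable

lemma cantor_stage_subset: "cantor_stage k \<subseteq> {0..1}"
  by (induction k) auto

lemma fmeasurable_subset_cantor_stage:
  assumes "A \<subseteq> cantor_stage k" "A \<in> sets borel"
  shows "A \<in> fmeasurable lborel"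
proof (rule fmeasurableI2)
  show "{0..1::real} \<in> fmeasurable lborel" by (simp add: fmeasurable_def)
qed (use assms cantor_stage_subset in auto)

lemma measure_cantor_stage_le: "measure lborel (cantor_stage k) \<le> (2/3) ^ k"
proof (induction k)
  case 0
  then show ?case by simp
next
  case (Suc k)
  have "measure lborel (cantor_stage (Suc k))
      \<le> measure lborel ((\<lambda>y. 0 + 3 * y) -` cantor_stage k) + measure lborel ((\<lambda>y. -2 + 3 * y) -` cantor_stage k)"
    unfolding cantor_stage.simps
    by (intro measure_Un_le fmeasurable_subset_cantor_stage[of _ "Suc k"])
      (auto simp only: cantor_stage.simps sets_lborel sets_affine_vimage sets_cantor_stage)
  also have "\<dots> = 2/3 * measure lborel (cantor_stage k)"
    using measure_lborel_affine_vimage[OF sets_cantor_stage, of 3 0 k]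
      measure_lborel_affine_vimage[OF sets_cantor_stage, of 3 "-2" k] by simp
  finally show ?case using Suc.IH by simp
qed

lemma cantor_set_null: "cantor_set \<in> null_sets lborel"
proof -
  have sub: "cantor_set \<subseteq> cantor_stage k" for k
    unfolding cantor_set_def by blast
  have fin: "cantor_set \<in> fmeasurable lborel"
    by (rule fmeasurable_subset_cantor_stage[OF sub sets_cantor_set])
  have "measure lborel cantor_set \<le> (2/3) ^ k" for k
  proof -
    have "measure lborel cantor_set \<le> measure lborel (cantor_stage k)"
      by (intro measure_mono_fmeasurable sub fmeasurable_subset_cantor_stage[OF order_refl]) simp_all
    with measure_cantor_stage_le[of k] show ?thesis by linarith
  qed
  then have "measure lborel cantor_set \<le> 0"
    by (intro LIMSEQ_le_const[OF LIMSEQ_power_zero[of "2/3::real"]]) auto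
  then have "emeasure lborel cantor_set = 0"
    using emeasure_eq_measure2[OF fin] measure_nonneg[of lborel cantor_set] by simp
  then show ?thesis by (intro null_setsI) simp_all
qed

lemma cantor_fun_in_cantor_stage: "cantor_fun x \<in> cantor_stage k"
proof (induction k arbitrary: x)
  case 0
  show ?case using cantor_fun_nonneg cantor_fun_le_1 by simp
next
  case (Suc k)
  from binary_digit_cases[of 0 x] show ?case
  proof
    assume "binary_digit 0 x = 0"
    then have "cantor_fun (2 * x) = 0 + 3 * cantor_fun x" using cantor_fun_rec[of x] by simp
    from Suc.IH[of "2 * x", unfolded this]
    have "cantor_fun x \<in> (\<lambda>y. 0 + 3 * y) -` cantor_stage k" by (rule vimageI2)
    then show ?case unfolding cantor_stage.simps by (rule UnI1)
  next
    assume "binary_digit 0 x = 1"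
    then have "cantor_fun (2 * x) = -2 + 3 * cantor_fun x" using cantor_fun_rec[of x] by simp
    from Suc.IH[of "2 * x", unfolded this]
    have "cantor_fun x \<in> (\<lambda>y. -2 + 3 * y) -` cantor_stage k" by (rule vimageI2)
    then show ?case unfolding cantor_stage.simps by (rule UnI2)
  qed
qed

lemma cantor_fun_in_cantor_set: "cantor_fun x \<in> cantor_set"
  unfolding cantor_set_def using cantor_fun_in_cantor_stage by blast

definition cantor_measure :: "real measure" where
  "cantor_measure = distr (uniform_measure lborel {0..1}) borel cantor_fun"

lemma prob_space_uniform_unit_interval: "prob_space (uniform_measure lborel {0..1::real})"
  by (rule prob_space_uniform_measure) auto

lemma prob_space_cantor_measure: "prob_space cantor_measure"
  unfolding cantor_measure_def
  by (rule prob_space.prob_space_distr[OF prob_space_uniform_unit_interval]) simp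

lemma sets_cantor_measure [measurable_cong]: "sets cantor_measure = sets borel"
  by (simp add: cantor_measure_def)

lemma AE_cantor_measure_unit: "AE u in cantor_measure. 0 \<le> u \<and> u \<le> 1"
  unfolding cantor_measure_def
  by (subst AE_distr_iff) (auto simp: cantor_fun_nonneg cantor_fun_le_1)

lemma emeasure_cantor_measure_compl: "emeasure cantor_measure (- cantor_set) = 0"
proof -
  have "cantor_fun -` (- cantor_set) = {}"
    using cantor_fun_in_cantor_set by auto
  then show ?thesis
    unfolding cantor_measure_def by (subst emeasure_distr) auto
qed

lemma emeasure_cantor_measure_singleton: "emeasure cantor_measure {x} = 0"
proof -
  have "cantor_fun -` {x} \<inter> {0..<1} \<subseteq> {THE y. y \<in> {0..<1} \<and> cantor_fun y = x}"
    by (rule inj_on_vimage_singleton[OF inj_on_cantor_fun])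
  then have "{0..1} \<inter> cantor_fun -` {x} \<subseteq> {1, THE y. y \<in> {0..<1} \<and> cantor_fun y = x}"
    by auto
  then have "finite ({0..1} \<inter> cantor_fun -` {x})"
    by (rule finite_subset) simp
  then have null: "{0..1} \<inter> cantor_fun -` {x} \<in> null_sets lborel"
    by (rule finite_imp_null_set_lborel)
  have [measurable]: "cantor_fun -` {x} \<in> sets borel"
    by (simp add: sets_vimage_borel)
  have "emeasure cantor_measure {x} = emeasure (uniform_measure lborel {0..1}) (cantor_fun -` {x})"
    unfolding cantor_measure_def by (subst emeasure_distr) auto
  also have "\<dots> = 0"
    using null by (subst emeasure_uniform_measure) auto
  finally show ?thesis .
qed

subsection \<open>Mixtures of probability measures\<close>

definition mixture :: "real \<Rightarrow> 'a measure \<Rightarrow> 'a measure \<Rightarrow> 'a measure" where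
  "mixture p M N = measure_pmf (bernoulli_pmf p) \<bind> (\<lambda>b. if b then M else N)"

context
  fixes M N :: "'a measure"
  assumes M: "prob_space M" and N: "prob_space N" and sets_N: "sets N = sets M"
begin

lemma measurable_mixture_kernel: "(\<lambda>b. if b then M else N) \<in> measure_pmf q \<rightarrow>\<^sub>M subprob_algebra M"
  using M N sets_N by (simp add: space_subprob_algebra prob_space_imp_subprob_space)

lemma sets_mixture [measurable_cong]: "sets (mixture p M N) = sets M"
  unfolding mixture_def by (rule sets_bind[where N=M]) (simp_all add: sets_N)

lemma emeasure_mixture:
  assumes "0 \<le> p" "p \<le> 1" "A \<in> sets M"
  shows "emeasure (mixture p M N) A = ennreal p * emeasure M A + ennreal (1 - p) * emeasure N A"
  unfolding mixture_def using assms
  by (simp add: emeasure_bind[OF _ measurable_mixture_kernel] mult.commute)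

lemma prob_space_mixture:
  assumes "0 \<le> p" "p \<le> 1"
  shows "prob_space (mixture p M N)"
proof
  have "emeasure M (space M) = 1" "emeasure N (space M) = 1"
    using M N sets_eq_imp_space_eq[OF sets_N] by (metis prob_space.emeasure_space_1)+
  then show "emeasure (mixture p M N) (space (mixture p M N)) = 1"
    using assms sets_eq_imp_space_eq[OF sets_mixture]
    by (simp add: emeasure_mixture ennreal_plus[symmetric] del: ennreal_plus)
qed

lemma integral_mixture:
  fixes h :: "'a \<Rightarrow> real"
  assumes "0 \<le> p" "p \<le> 1" and [measurable]: "h \<in> borel_measurable M" and "\<And>x. \<bar>h x\<bar> \<le> B"
  shows "(\<integral>x. h x \<partial>mixture p M N) = p * (\<integral>x. h x \<partial>M) + (1 - p) * (\<integral>x. h x \<partial>N)"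
  unfolding mixture_def using assms
  by (subst integral_bind[OF _ _ measurable_mixture_kernel, where B=B and B'=1])
     (use M N in \<open>auto simp: mult.commute measure_pmf.finite_measure_axioms prob_space.emeasure_space_1\<close>)

end

lemma (in prob_space) abs_integral_le_const:
  fixes f :: "'a \<Rightarrow> real"
  assumes "f \<in> borel_measurable M" "\<And>x. \<bar>f x\<bar> \<le> B"
  shows "\<bar>\<integral>x. f x \<partial>M\<bar> \<le> B"
proof -
  have "integrable M f"
    using assms by (intro integrable_const_bound[where B=B]) auto
  have "\<bar>\<integral>x. f x \<partial>M\<bar> \<le> (\<integral>x. \<bar>f x\<bar> \<partial>M)"
    by (rule integral_abs_bound)
  also have "\<dots> \<le> B"
    using \<open>integrable M f\<close> assms(2) by (intro integral_le_const) auto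
  finally show ?thesis .
qed

lemma (in prob_space) tendsto_integral_distr:
  fixes X :: "nat \<Rightarrow> 'a \<Rightarrow> real" and h :: "real \<Rightarrow> real"
  assumes [measurable]: "\<And>n. X n \<in> borel_measurable M" "Y \<in> borel_measurable M"
    and lim: "\<And>x. x \<in> space M \<Longrightarrow> (\<lambda>n. X n x) \<longlonglongrightarrow> Y x"
    and h: "continuous_on UNIV h" and bound: "\<And>x. \<bar>h x\<bar> \<le> B"
  shows "(\<lambda>n. \<integral>x. h x \<partial>distr M borel (X n)) \<longlonglongrightarrow> (\<integral>x. h x \<partial>distr M borel Y)"
proof -
  have [measurable]: "h \<in> borel_measurable borel"
    using h by (rule borel_measurable_continuous_onI)
  have "(\<lambda>n. \<integral>x. h (X n x) \<partial>M) \<longlonglongrightarrow> (\<integral>x. h (Y x) \<partial>M)"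
  proof (rule integral_dominated_convergence[where w="\<lambda>_. B"])
    show "AE x in M. (\<lambda>n. h (X n x)) \<longlonglongrightarrow> h (Y x)"
      using lim h by (intro AE_I2 isCont_tendsto_compose[where g=h]) (auto simp: continuous_on_eq_continuous_at)
    show "AE x in M. norm (h (X n x)) \<le> B" for n
      using bound by simp
  qed simp_all
  then show ?thesis by (simp add: integral_distr)
qed

lemma integral_eq_0_if_not_borel_measurable:
  fixes f :: "real \<Rightarrow> real"
  assumes "sets N = sets borel" "f \<notin> borel_measurable borel"
  shows "integral\<^sup>L N f = 0"
  using assms measurable_cong_sets[OF assms(1) refl, of borel]
  by (intro not_integrable_integral_eq) auto

lemma weak_conv_halflineI:
  assumes sets: "\<And>n. sets (Ms n) = sets borel" "sets M = sets borel"
    and nonneg: "\<And>n. AE x in Ms n. 0 \<le> x" "AE x in M. 0 \<le> x"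
    and lim: "\<And>(h :: real \<Rightarrow> real) B. continuous_on UNIV h \<Longrightarrow> (\<And>x. \<bar>h x\<bar> \<le> B) \<Longrightarrow>
      (\<lambda>n. \<integral>x. h x \<partial>Ms n) \<longlonglongrightarrow> (\<integral>x. h x \<partial>M)"
  shows "weak_conv_halfline Ms M"
  unfolding weak_conv_halfline_def
proof (intro allI impI)
  fix f :: "real \<Rightarrow> real"
  assume f: "continuous_on {0..} f \<and> bounded (f ` {0..})"
  show "(\<lambda>n. integral\<^sup>L (Ms n) f) \<longlonglongrightarrow> integral\<^sup>L M f"
  proof (cases "f \<in> borel_measurable borel")
    case False
    then show ?thesis
      using sets integral_eq_0_if_not_borel_measurable by simp
  next
    case True
    note [measurable] = True
    obtain B where B: "\<And>x. 0 \<le> x \<Longrightarrow> \<bar>f x\<bar> \<le> B"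
      using f unfolding bounded_iff by auto
    define g where "g x = f (max 0 x)" for x
    have [measurable]: "g \<in> borel_measurable borel"
      unfolding g_def by measurable
    have g_cont: "continuous_on UNIV g"
      unfolding g_def using f
      by (intro continuous_on_compose2[of "{0..}" f UNIV "\<lambda>x. max 0 x"] continuous_intros) auto
    have g_bound: "\<bar>g x\<bar> \<le> B" for x
      unfolding g_def by (rule B) simp
    have lim_g: "(\<lambda>n. \<integral>x. g x \<partial>Ms n) \<longlonglongrightarrow> (\<integral>x. g x \<partial>M)"
      by (rule lim[OF g_cont g_bound])
    have "integral\<^sup>L N f = integral\<^sup>L N g"
      if [measurable_cong]: "sets N = sets borel" and "AE x in N. 0 \<le> x" for N :: "real measure"
    proof (rule integral_cong_AE)
      show "AE x in N. f x = g x"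
        using that(2) by eventually_elim (simp add: g_def)
      show "f \<in> borel_measurable N" "g \<in> borel_measurable N"
        by measurable
    qed
    with lim_g show ?thesis
      using sets nonneg by presburger
  qed
qed

definition trunc_weight :: "nat \<Rightarrow> real \<Rightarrow> real" where
  "trunc_weight d y = (1 - min 1 (max 0 y)) ^ (d - 1)"

lemma continuous_on_trunc_weight: "continuous_on UNIV (trunc_weight d)"
  unfolding trunc_weight_def by (intro continuous_intros)

lemma borel_measurable_trunc_weight [measurable]: "trunc_weight d \<in> borel_measurable borel"
  unfolding trunc_weight_def by measurable

lemma abs_trunc_weight_le_1: "\<bar>trunc_weight d y\<bar> \<le> 1"
  unfolding trunc_weight_def by (auto intro: power_le_one)

lemma trunc_weight_eq_0: "2 \<le> d \<Longrightarrow> 1 \<le> y \<Longrightarrow> trunc_weight d y = 0"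
  unfolding trunc_weight_def by simp

lemma trunc_weight_ge:
  assumes "0 \<le> y" "y \<le> s" "s \<le> 1"
  shows "(1 - s) ^ (d - 1) \<le> trunc_weight d y"
  unfolding trunc_weight_def using assms by (intro power_mono) auto

lemma PW_iff:
  assumes d: "2 \<le> d"
  shows "M \<in> PW d \<longleftrightarrow> prob_space M \<and> sets M = sets borel \<and> emeasure M {..0} = 0 \<and>
    (\<integral>y. trunc_weight d y \<partial>M) = 1/2"
proof -
  have "(LINT t:{0..1}|M. (1 - t) ^ (d - 1)) = (\<integral>y. trunc_weight d y \<partial>M)"
    if sets [measurable_cong]: "sets M = sets borel" and neg: "emeasure M {..<0} = 0"
    for M :: "real measure"
  proof -
    have "AE y in M. 0 \<le> y"
      using neg sets by (intro AE_I'[of "{..<0}"]) auto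
    then have "AE y in M. indicator {0..1} y *\<^sub>R (1 - y) ^ (d - 1) = trunc_weight d y"
      by eventually_elim (use d in \<open>auto simp: trunc_weight_def indicator_def\<close>)
    then show ?thesis
      unfolding set_lebesgue_integral_def by (rule integral_cong_AE[rotated 2]; measurable)
  qed
  moreover have "emeasure M {..0} = emeasure M {..<0} + emeasure M {0}"
    if "sets M = sets borel" for M :: "real measure"
  proof -
    have "{..0::real} = {..<0} \<union> {0}" by auto
    then show ?thesis using plus_emeasure[of "{..<0}" M "{0}"] that by simp
  qed
  ultimately show ?thesis
    unfolding PW_def prob_on_halfline_def by auto
qed

definition grid_point :: "nat \<Rightarrow> real \<Rightarrow> real" where
  "grid_point n t = \<lceil>real (Suc n) * t\<rceil> / real (Suc n)"

lemma borel_measurable_grid_point [measurable]: "grid_point n \<in> borel_measurable borel"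
  unfolding grid_point_def by measurable

lemma grid_point_pos: "0 < t \<Longrightarrow> 0 < grid_point n t"
  unfolding grid_point_def by (simp add: divide_pos_pos)

lemma grid_point_perturbed_tendsto: "(\<lambda>n. grid_point n t + u / real (Suc n)) \<longlonglongrightarrow> t"
proof -
  have "norm (grid_point n t - t) \<le> inverse (real (Suc n))" for n
  proof -
    let ?m = "real (Suc n)"
    have "?m * t \<le> \<lceil>?m * t\<rceil>" "\<lceil>?m * t\<rceil> < ?m * t + 1"
      by linarith+
    then have "\<bar>\<lceil>?m * t\<rceil> - ?m * t\<bar> \<le> 1"
      by linarith
    moreover have "grid_point n t - t = (\<lceil>?m * t\<rceil> - ?m * t) / ?m"
      unfolding grid_point_def by (simp add: field_simps)
    ultimately show ?thesis
      by (simp add: abs_divide divide_right_mono inverse_eq_divide)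
  qed
  then have "(\<lambda>n. grid_point n t - t) \<longlonglongrightarrow> 0"
    by (intro Lim_null_comparison[OF always_eventually LIMSEQ_inverse_real_of_nat]) simp
  moreover have "(\<lambda>n. u * inverse (real (Suc n))) \<longlonglongrightarrow> 0"
    using tendsto_mult[OF tendsto_const LIMSEQ_inverse_real_of_nat, of u] by simp
  ultimately have "(\<lambda>n. t + (grid_point n t - t) + u * inverse (real (Suc n))) \<longlonglongrightarrow> t + 0 + 0"
    by (intro tendsto_add tendsto_const)
  then show ?thesis
    by (simp add: divide_inverse)
qed

subsection \<open>The approximating measures\<close>

lemma one_minus_inverse_pow_gt_half:
  assumes "1 \<le> d"
  shows "1/2 < (1 - 1 / (2 * real d)) ^ (d - 1)"
proof -
  have "1 + real (d - 1) * (- (1 / (2 * real d))) \<le> (1 + - (1 / (2 * real d))) ^ (d - 1)"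
    using assms by (intro Bernoulli_inequality) simp
  moreover have "real (d - 1) * (1 / (2 * real d)) < 1/2"
    using assms by (simp add: of_nat_diff field_simps)
  ultimately show ?thesis by simp
qed

lemma convex_weight:
  fixes a c h :: real
  assumes "a \<le> h \<and> h < c \<or> c < h \<and> h \<le> a"
  shows "0 \<le> (h - a) / (c - a)" and "(h - a) / (c - a) \<le> 1"
    and "(h - a) / (c - a) * c + (1 - (h - a) / (c - a)) * a = h"
proof -
  from assms have sign: "0 \<le> h - a \<and> h - a \<le> c - a \<and> 0 < c - a \<or> h - a \<le> 0 \<and> c - a \<le> h - a \<and> c - a < 0"
    by linarith
  then show "0 \<le> (h - a) / (c - a)"
    by (auto simp: divide_nonneg_pos divide_nonpos_neg)
  from sign show "(h - a) / (c - a) \<le> 1"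
    by (auto simp: pos_divide_le_eq neg_divide_le_eq)
  from assms have "c - a \<noteq> 0" by auto
  have combination: "w * c + (1 - w) * a = a + w * (c - a)" for w :: real
    by (simp add: algebra_simps)
  show "(h - a) / (c - a) * c + (1 - (h - a) / (c - a)) * a = h"
    unfolding combination using \<open>c - a \<noteq> 0\<close> by simp
qed

locale PW_approximation =
  fixes \<nu> :: "real measure" and d :: nat and \<gamma> :: "real measure"
  assumes prob_space_\<nu>: "prob_space \<nu>" and sets_\<nu> [measurable_cong]: "sets \<nu> = sets borel"
    and AE_\<nu>_unit: "AE u in \<nu>. 0 \<le> u \<and> u \<le> 1"
    and d: "2 \<le> d" and \<gamma>_PW: "\<gamma> \<in> PW d"
begin

sublocale noise: prob_space \<nu>
  by (rule prob_space_\<nu>)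

lemma prob_space_\<gamma>: "prob_space \<gamma>"
  and sets_\<gamma> [measurable_cong]: "sets \<gamma> = sets borel"
  and emeasure_\<gamma>_nonpos: "emeasure \<gamma> {..0} = 0"
  and integral_trunc_weight_\<gamma>: "(\<integral>t. trunc_weight d t \<partial>\<gamma>) = 1/2"
  using \<gamma>_PW PW_iff[OF d] by auto

sublocale target: prob_space \<gamma>
  by (rule prob_space_\<gamma>)

lemma AE_\<gamma>_pos: "AE t in \<gamma>. 0 < t"
  using emeasure_\<gamma>_nonpos by (intro AE_I'[of "{..0}"]) auto

lemma space_\<nu>: "space \<nu> = UNIV"
  using sets_eq_imp_space_eq[OF sets_\<nu>] by simp

lemma space_\<gamma>: "space \<gamma> = UNIV"
  using sets_eq_imp_space_eq[OF sets_\<gamma>] by simp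

lemma emeasure_\<nu>_vimage_eq_0:
  assumes "f \<in> borel_measurable borel" "A \<in> sets borel" "AE u in \<nu>. f u \<notin> A"
  shows "emeasure \<nu> (f -` A) = 0"
proof -
  have "f -` A \<in> sets \<nu>"
    using sets_vimage_borel[OF assms(1,2)] by (simp add: sets_\<nu>)
  then show ?thesis
    using AE_iff_measurable[of "f -` A" \<nu> "\<lambda>u. f u \<notin> A"] assms(3) by (simp add: space_\<nu> vimage_def)
qed

definition smoothed :: "nat \<Rightarrow> real measure" where
  "smoothed n = distr (\<gamma> \<Otimes>\<^sub>M \<nu>) borel (\<lambda>(t, u). grid_point n t + u / real (Suc n))"

definition smoothed_weight :: "nat \<Rightarrow> real" where
  "smoothed_weight n = (\<integral>x. trunc_weight d x \<partial>smoothed n)"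

text \<open>The correction lies in \<open>[2, 3]\<close>, where \<open>trunc_weight d\<close> vanishes, if the smoothed measure
  gives too much weight, and otherwise in \<open>[1/(4d), 1/(2d)]\<close>, where \<open>trunc_weight d > 1/2\<close>.\<close>
definition correction_map :: "nat \<Rightarrow> real \<Rightarrow> real" where
  "correction_map n u = (if 1/2 \<le> smoothed_weight n then 2 + u else (1 + u) / (4 * real d))"

definition correction :: "nat \<Rightarrow> real measure" where
  "correction n = distr \<nu> borel (correction_map n)"

definition correction_weight :: "nat \<Rightarrow> real" where
  "correction_weight n = (\<integral>x. trunc_weight d x \<partial>correction n)"

definition mix_weight :: "nat \<Rightarrow> real" where
  "mix_weight n = (1/2 - smoothed_weight n) / (correction_weight n - smoothed_weight n)"

definition approx :: "nat \<Rightarrow> real measure" where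
  "approx n = mixture (mix_weight n) (correction n) (smoothed n)"

lemma sets_smoothed [measurable_cong]: "sets (smoothed n) = sets borel"
  by (simp add: smoothed_def)

lemma prob_space_smoothed: "prob_space (smoothed n)"
  unfolding smoothed_def
  by (intro prob_space.prob_space_distr prob_space_pair prob_space_\<gamma> prob_space_\<nu>) simp

lemma borel_measurable_correction_map [measurable]: "correction_map n \<in> borel_measurable borel"
  unfolding correction_map_def by simp

lemma sets_correction [measurable_cong]: "sets (correction n) = sets borel"
  by (simp add: correction_def)

lemma prob_space_correction: "prob_space (correction n)"
  unfolding correction_def by (intro noise.prob_space_distr) simp

lemma correction_map_affine: "\<exists>a b. 0 < b \<and> correction_map n = (\<lambda>u. a + b * u)"
proof (cases "1/2 \<le> smoothed_weight n")
  case True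
  then have "correction_map n = (\<lambda>u. 2 + 1 * u)"
    by (simp add: correction_map_def fun_eq_iff)
  moreover have "0 < (1::real)"
    by simp
  ultimately show ?thesis by blast
next
  case False
  then have "correction_map n = (\<lambda>u. 1 / (4 * real d) + 1 / (4 * real d) * u)"
    by (simp add: correction_map_def fun_eq_iff add_divide_distrib)
  moreover have "0 < 1 / (4 * real d)"
    using d by simp
  ultimately show ?thesis by blast
qed

lemma smoothed_tendsto:
  fixes h :: "real \<Rightarrow> real"
  assumes "continuous_on UNIV h" "\<And>x. \<bar>h x\<bar> \<le> B"
  shows "(\<lambda>n. \<integral>x. h x \<partial>smoothed n) \<longlonglongrightarrow> (\<integral>x. h x \<partial>\<gamma>)"
proof -
  have "(\<lambda>n. \<integral>x. h x \<partial>smoothed n) \<longlonglongrightarrow> (\<integral>x. h x \<partial>distr (\<gamma> \<Otimes>\<^sub>M \<nu>) borel fst)"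
    unfolding smoothed_def
    by (rule prob_space.tendsto_integral_distr[OF prob_space_pair[OF prob_space_\<gamma> prob_space_\<nu>]])
      (use assms grid_point_perturbed_tendsto in \<open>simp_all add: case_prod_beta\<close>)
  moreover have "distr (\<gamma> \<Otimes>\<^sub>M \<nu>) borel fst = \<gamma>"
    using noise.distr_pair_fst[of \<gamma>] distr_cong[OF refl sets_\<gamma>, of "\<gamma> \<Otimes>\<^sub>M \<nu>" fst fst] by simp
  ultimately show ?thesis by simp
qed

lemma smoothed_weight_tendsto: "smoothed_weight \<longlonglongrightarrow> 1/2"
  unfolding smoothed_weight_def integral_trunc_weight_\<gamma>[symmetric]
  by (rule smoothed_tendsto[OF continuous_on_trunc_weight abs_trunc_weight_le_1])

lemma correction_weight_far:
  assumes "1/2 \<le> smoothed_weight n"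
  shows "correction_weight n = 0"
proof -
  have "AE u in \<nu>. trunc_weight d (correction_map n u) = 0"
    using AE_\<nu>_unit by eventually_elim (use assms d in \<open>simp add: correction_map_def trunc_weight_eq_0\<close>)
  then show ?thesis
    unfolding correction_weight_def correction_def by (simp add: integral_distr integral_eq_zero_AE)
qed

lemma correction_weight_near:
  assumes "smoothed_weight n < 1/2"
  shows "(1 - 1 / (2 * real d)) ^ (d - 1) \<le> correction_weight n"
proof -
  have "AE u in \<nu>. (1 - 1 / (2 * real d)) ^ (d - 1) \<le> trunc_weight d (correction_map n u)"
    using AE_\<nu>_unit
  proof eventually_elim
    case (elim u)
    have "correction_map n u = (1 + u) / (4 * real d)"
      using assms by (simp add: correction_map_def)
    moreover have "(1 + u) / (4 * real d) \<le> 2 / (4 * real d)"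
      using elim by (intro divide_right_mono) auto
    ultimately show ?case
      using elim d by (intro trunc_weight_ge) auto
  qed
  then have "(1 - 1 / (2 * real d)) ^ (d - 1) \<le> (\<integral>u. trunc_weight d (correction_map n u) \<partial>\<nu>)"
    by (rule noise.integral_ge_const[rotated], intro noise.integrable_const_bound[where B=1])
      (simp_all add: abs_trunc_weight_le_1)
  then show ?thesis
    unfolding correction_weight_def correction_def by (simp add: integral_distr)
qed

lemma half_between_weights:
  "smoothed_weight n \<le> 1/2 \<and> 1/2 < correction_weight n \<or> correction_weight n < 1/2 \<and> 1/2 \<le> smoothed_weight n"
proof (cases "1/2 \<le> smoothed_weight n")
  case True
  then show ?thesis using correction_weight_far[OF True] by simp
next
  case False
  then show ?thesis
    using correction_weight_near[of n] one_minus_inverse_pow_gt_half[of d] d by simp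
qed

lemma mix_weight_bounds: "0 \<le> mix_weight n" "mix_weight n \<le> 1"
  and mix_weight_balance: "mix_weight n * correction_weight n + (1 - mix_weight n) * smoothed_weight n = 1/2"
  unfolding mix_weight_def using convex_weight[OF half_between_weights] by simp_all

lemma mix_weight_tendsto: "mix_weight \<longlonglongrightarrow> 0"
proof -
  define \<delta> where "\<delta> = min (1/2) ((1 - 1 / (2 * real d)) ^ (d - 1) - 1/2)"
  have \<delta>: "0 < \<delta>"
    using one_minus_inverse_pow_gt_half[of d] d by (simp add: \<delta>_def)
  have gap: "\<delta> \<le> \<bar>correction_weight n - smoothed_weight n\<bar>" for n
  proof (cases "1/2 \<le> smoothed_weight n")
    case True
    then show ?thesis using correction_weight_far[OF True] by (simp add: \<delta>_def)
  next
    case False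
    then show ?thesis using correction_weight_near[of n] by (simp add: \<delta>_def)
  qed
  have bound: "norm (mix_weight n) \<le> \<bar>1/2 - smoothed_weight n\<bar> / \<delta>" for n
    unfolding mix_weight_def real_norm_def abs_divide using gap[of n] \<delta>
    by (intro divide_left_mono) auto
  have "(\<lambda>n. 1/2 - smoothed_weight n) \<longlonglongrightarrow> 0"
    using tendsto_diff[OF tendsto_const smoothed_weight_tendsto, of "1/2"] by simp
  then have "(\<lambda>n. \<bar>1/2 - smoothed_weight n\<bar> / \<delta>) \<longlonglongrightarrow> 0"
    by (intro tendsto_divide_zero tendsto_rabs_zero)
  then show ?thesis
    by (rule Lim_null_comparison[OF always_eventually[OF allI[OF bound]]])
qed

lemma sets_approx [measurable_cong]: "sets (approx n) = sets borel"
  unfolding approx_def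
  by (simp add: sets_mixture[OF prob_space_correction prob_space_smoothed] sets_correction sets_smoothed)

lemma prob_space_approx: "prob_space (approx n)"
  unfolding approx_def
  by (intro prob_space_mixture prob_space_correction prob_space_smoothed mix_weight_bounds)
    (simp add: sets_correction sets_smoothed)

lemma integral_approx:
  fixes h :: "real \<Rightarrow> real"
  assumes [measurable]: "h \<in> borel_measurable borel" and "\<And>x. \<bar>h x\<bar> \<le> B"
  shows "(\<integral>x. h x \<partial>approx n) = mix_weight n * (\<integral>x. h x \<partial>correction n) + (1 - mix_weight n) * (\<integral>x. h x \<partial>smoothed n)"
  unfolding approx_def using assms
  by (intro integral_mixture prob_space_correction prob_space_smoothed mix_weight_bounds)
    (simp_all add: sets_correction sets_smoothed)

lemma emeasure_approx_eq_0:
  assumes [measurable]: "A \<in> sets borel"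
    and correction_null: "emeasure \<nu> (correction_map n -` A) = 0"
    and smoothed_null: "\<And>t. 0 < t \<Longrightarrow> emeasure \<nu> ((\<lambda>u. grid_point n t + u / real (Suc n)) -` A) = 0"
  shows "emeasure (approx n) A = 0"
proof -
  have "emeasure (correction n) A = 0"
    unfolding correction_def using correction_null by (simp add: emeasure_distr space_\<nu>)
  moreover have "emeasure (smoothed n) A = 0"
  proof -
    define S where "S = (\<lambda>(t, u). grid_point n t + u / real (Suc n)) -` A \<inter> space (\<gamma> \<Otimes>\<^sub>M \<nu>)"
    have S: "S \<in> sets (\<gamma> \<Otimes>\<^sub>M \<nu>)"
      unfolding S_def by measurable
    have "emeasure (smoothed n) A = emeasure (\<gamma> \<Otimes>\<^sub>M \<nu>) S"
      unfolding smoothed_def S_def by (rule emeasure_distr) simp_all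
    also have "\<dots> = (\<integral>\<^sup>+t. emeasure \<nu> (Pair t -` S) \<partial>\<gamma>)"
      by (rule noise.emeasure_pair_measure_alt[OF S])
    also have "\<dots> = (\<integral>\<^sup>+t. 0 \<partial>\<gamma>)"
    proof (rule nn_integral_cong_AE)
      show "AE t in \<gamma>. emeasure \<nu> (Pair t -` S) = 0"
        using AE_\<gamma>_pos
      proof eventually_elim
        case (elim t)
        have "Pair t -` S = (\<lambda>u. grid_point n t + u / real (Suc n)) -` A"
          by (auto simp: S_def space_pair_measure space_\<nu> space_\<gamma>)
        then show ?case using smoothed_null[OF elim] by simp
      qed
    qed
    finally show ?thesis by simp
  qed
  ultimately show ?thesis
    unfolding approx_def
    by (simp add: emeasure_mixture[OF prob_space_correction prob_space_smoothed] sets_correction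
        sets_smoothed mix_weight_bounds)
qed

lemma emeasure_approx_eq_0_affine:
  assumes "A \<in> sets borel" and "\<And>a b. b \<noteq> 0 \<Longrightarrow> emeasure \<nu> ((\<lambda>u. a + b * u) -` A) = 0"
  shows "emeasure (approx n) A = 0"
proof (rule emeasure_approx_eq_0[OF assms(1)])
  obtain a b where "0 < b" "correction_map n = (\<lambda>u. a + b * u)"
    using correction_map_affine by blast
  then show "emeasure \<nu> (correction_map n -` A) = 0"
    using assms(2) by simp
  show "emeasure \<nu> ((\<lambda>u. grid_point n t + u / real (Suc n)) -` A) = 0" for t
    using assms(2)[of "1 / real (Suc n)" "grid_point n t"] by (simp add: divide_inverse mult.commute)
qed

lemma emeasure_approx_compl_eq_0:
  assumes S: "S \<in> sets borel" "emeasure \<nu> (- S) = 0" and A: "A \<in> sets borel"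
    and correction_in: "\<And>u. u \<in> S \<Longrightarrow> correction_map n u \<in> A"
    and smoothed_in: "\<And>t u. u \<in> S \<Longrightarrow> grid_point n t + u / real (Suc n) \<in> A"
  shows "emeasure (approx n) (- A) = 0"
proof (rule emeasure_approx_eq_0)
  have null: "emeasure \<nu> B = 0" if "B \<subseteq> - S" for B
    using emeasure_mono[OF that, of \<nu>] S by (simp add: sets_\<nu>)
  show "emeasure \<nu> (correction_map n -` (- A)) = 0"
    using correction_in by (intro null) auto
  show "emeasure \<nu> ((\<lambda>u. grid_point n t + u / real (Suc n)) -` (- A)) = 0" for t
    using smoothed_in by (intro null) auto
qed (use A in auto)

lemma discrete_approx:
  assumes "countable C" "emeasure \<nu> (- C) = 0"
  shows "discrete_measure (approx n)"
proof -
  define D where "D = correction_map n ` C \<union> (\<lambda>(k::int, u). of_int k / real (Suc n) + u / real (Suc n)) ` (UNIV \<times> C)"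
  have "countable D"
    unfolding D_def using assms(1) by simp
  have sets_countable: "X \<in> sets borel" if "countable X" for X :: "real set"
    using that by (rule sets.countable[rotated]) simp
  have "emeasure (approx n) (- D) = 0"
  proof (rule emeasure_approx_compl_eq_0[OF sets_countable[OF assms(1)] assms(2) sets_countable[OF \<open>countable D\<close>]])
    show "correction_map n u \<in> D" if "u \<in> C" for u
      using that by (simp add: D_def)
    show "grid_point n t + u / real (Suc n) \<in> D" if "u \<in> C" for t u
      unfolding D_def grid_point_def using that
      by (intro UnI2 image_eqI[where x="(\<lceil>real (Suc n) * t\<rceil>, u)"]) auto
  qed
  then show ?thesis
    unfolding discrete_measure_def
    using \<open>countable D\<close> sets_countable[OF \<open>countable D\<close>] sets_eq_imp_space_eq[OF sets_approx[of n]]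
    by (intro exI[of _ D]) (simp add: sets_approx Compl_eq_Diff_UNIV)
qed

lemma singular_approx:
  assumes K: "K \<in> null_sets lborel" and "emeasure \<nu> (- K) = 0"
  shows "singular_measure (approx n)"
proof -
  obtain a b where b: "0 < b" and corr: "correction_map n = (\<lambda>u. a + b * u)"
    using correction_map_affine by blast
  define N where "N = (\<lambda>y. - a / b + (1 / b) * y) -` K
    \<union> (\<Union>k::int. (\<lambda>y. - of_int k + real (Suc n) * y) -` K)"
  have N: "N \<in> null_sets lborel"
    unfolding N_def using b K by (intro null_sets.Un null_sets_UN affine_vimage_null_sets) auto
  have "emeasure (approx n) (- N) = 0"
  proof (rule emeasure_approx_compl_eq_0[OF _ assms(2)])
    show "K \<in> sets borel" "N \<in> sets borel"
      using K N by auto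
    show "correction_map n u \<in> N" if "u \<in> K" for u
    proof -
      have "- a / b + (1 / b) * correction_map n u = u"
        using b by (simp add: corr field_simps)
      then show ?thesis
        using that unfolding N_def by (intro UnI1 vimageI2) (simp only:)
    qed
    show "grid_point n t + u / real (Suc n) \<in> N" if "u \<in> K" for t u
    proof -
      have "real (Suc n) * (grid_point n t + u / real (Suc n)) = \<lceil>real (Suc n) * t\<rceil> + u"
        unfolding grid_point_def by (simp add: distrib_left del: of_nat_Suc)
      then have eq: "- of_int \<lceil>real (Suc n) * t\<rceil> + real (Suc n) * (grid_point n t + u / real (Suc n)) = u"
        by simp
      have "grid_point n t + u / real (Suc n) \<in> (\<lambda>y. - of_int \<lceil>real (Suc n) * t\<rceil> + real (Suc n) * y) -` K"
        using that by (simp only: vimage_eq eq)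
      then show ?thesis
        unfolding N_def by blast
    qed
  qed
  then show ?thesis
    unfolding singular_measure_def using N sets_eq_imp_space_eq[OF sets_approx[of n]]
    by (intro bexI[of _ N]) (auto simp: Compl_eq_Diff_UNIV)
qed

lemma no_atoms_approx:
  assumes "\<And>x. emeasure \<nu> {x} = 0"
  shows "no_atoms (approx n)"
  unfolding no_atoms_def
proof
  fix x :: real
  show "emeasure (approx n) {x} = 0"
  proof (rule emeasure_approx_eq_0_affine)
    fix a b :: real assume "b \<noteq> 0"
    then have "(\<lambda>u. a + b * u) -` {x} = {(x - a) / b}"
      by (auto simp: field_simps)
    then show "emeasure \<nu> ((\<lambda>u. a + b * u) -` {x}) = 0"
      by (simp add: assms)
  qed simp
qed

lemma abs_cont_approx:
  assumes "absolutely_continuous lborel \<nu>"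
  shows "abs_cont_measure (approx n)"
  unfolding abs_cont_measure_def absolutely_continuous_def
proof
  fix N :: "real set" assume N: "N \<in> null_sets lborel"
  have "emeasure (approx n) N = 0"
  proof (rule emeasure_approx_eq_0_affine)
    show "emeasure \<nu> ((\<lambda>u. a + b * u) -` N) = 0" if "b \<noteq> 0" for a b
      using assms affine_vimage_null_sets[OF N that]
      by (intro null_setsD1) (auto simp: absolutely_continuous_def)
  qed (use N in auto)
  then show "N \<in> null_sets (approx n)"
    using N sets_approx by (auto simp: null_sets_def)
qed

lemma emeasure_approx_nonpos: "emeasure (approx n) {..0} = 0"
proof (rule emeasure_approx_eq_0)
  have "AE u in \<nu>. correction_map n u \<notin> {..0}"
    using AE_\<nu>_unit by eventually_elim (use d in \<open>auto simp: correction_map_def divide_le_0_iff\<close>)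
  then show "emeasure \<nu> (correction_map n -` {..0}) = 0"
    by (intro emeasure_\<nu>_vimage_eq_0) simp_all
  fix t :: real assume t: "0 < t"
  have "AE u in \<nu>. grid_point n t + u / real (Suc n) \<notin> {..0}"
    using AE_\<nu>_unit by eventually_elim (use t in \<open>auto simp: add_pos_nonneg grid_point_pos not_le\<close>)
  then show "emeasure \<nu> ((\<lambda>u. grid_point n t + u / real (Suc n)) -` {..0}) = 0"
    by (intro emeasure_\<nu>_vimage_eq_0) simp_all
qed simp



lemma approx_in_PW: "approx n \<in> PW d"
  unfolding PW_iff[OF d]
  using prob_space_approx sets_approx emeasure_approx_nonpos mix_weight_balance
    integral_approx[OF borel_measurable_trunc_weight abs_trunc_weight_le_1]
  by (simp add: correction_weight_def smoothed_weight_def)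

lemma weak_conv_approx: "weak_conv_halfline approx \<gamma>"
proof (rule weak_conv_halflineI[OF sets_approx sets_\<gamma>])
  show "AE x in approx n. 0 \<le> x" for n
    using emeasure_approx_nonpos sets_approx by (intro AE_I'[of "{..0}"]) auto
  show "AE x in \<gamma>. 0 \<le> x"
    using AE_\<gamma>_pos by eventually_elim simp
  fix h :: "real \<Rightarrow> real" and B
  assume h: "continuous_on UNIV h" and bound: "\<And>x. \<bar>h x\<bar> \<le> B"
  have [measurable]: "h \<in> borel_measurable borel"
    using h by (rule borel_measurable_continuous_onI)
  have "(\<lambda>n. mix_weight n * (\<integral>x. h x \<partial>correction n)) \<longlonglongrightarrow> 0"
  proof (rule Lim_null_comparison[OF always_eventually[OF allI]])
    fix n
    have "\<bar>\<integral>x. h x \<partial>correction n\<bar> \<le> B"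
      by (rule prob_space.abs_integral_le_const[OF prob_space_correction _ bound]) measurable
    then show "norm (mix_weight n * (\<integral>x. h x \<partial>correction n)) \<le> mix_weight n * B"
      using mix_weight_bounds[of n] by (simp add: abs_mult mult_left_mono)
  next
    show "(\<lambda>n. mix_weight n * B) \<longlonglongrightarrow> 0"
      using tendsto_mult[OF mix_weight_tendsto tendsto_const, of B] by simp
  qed
  moreover have "(\<lambda>n. (1 - mix_weight n) * (\<integral>x. h x \<partial>smoothed n)) \<longlonglongrightarrow> (1 - 0) * (\<integral>x. h x \<partial>\<gamma>)"
    by (intro tendsto_mult tendsto_diff tendsto_const mix_weight_tendsto smoothed_tendsto[OF h bound])
  ultimately have "(\<lambda>n. mix_weight n * (\<integral>x. h x \<partial>correction n) + (1 - mix_weight n) * (\<integral>x. h x \<partial>smoothed n))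
      \<longlonglongrightarrow> 0 + (1 - 0) * (\<integral>x. h x \<partial>\<gamma>)"
    by (rule tendsto_add)
  then show "(\<lambda>n. \<integral>x. h x \<partial>approx n) \<longlonglongrightarrow> (\<integral>x. h x \<partial>\<gamma>)"
    by (simp add: integral_approx[OF _ bound])
qed

end

lemma PW_discrete_approximation:
  assumes "2 \<le> d" "\<gamma> \<in> PW d"
  shows "\<exists>\<gamma>1 :: nat \<Rightarrow> real measure. (\<forall>n. \<gamma>1 n \<in> PW d \<and> discrete_measure (\<gamma>1 n))
    \<and> weak_conv_halfline \<gamma>1 \<gamma>"
proof -
  interpret PW_approximation "return borel 0" d \<gamma>
  proof (rule PW_approximation.intro)
    show "prob_space (return borel (0::real))"
      by (rule prob_space_return) simp
    show "AE u in return borel 0. 0 \<le> u \<and> u \<le> (1::real)"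
      by (simp add: AE_return)
  qed (use assms in simp_all)
  have "emeasure (return borel 0) (- {0::real}) = 0"
    by (subst emeasure_return) auto
  then have "discrete_measure (approx n)" for n
    by (intro discrete_approx[of "{0}"]) simp_all
  then show ?thesis
    using approx_in_PW weak_conv_approx by blast
qed

lemma PW_singular_approximation:
  assumes "2 \<le> d" "\<gamma> \<in> PW d"
  shows "\<exists>\<gamma>2 :: nat \<Rightarrow> real measure. (\<forall>n. \<gamma>2 n \<in> PW d \<and> singular_measure (\<gamma>2 n) \<and> no_atoms (\<gamma>2 n))
    \<and> weak_conv_halfline \<gamma>2 \<gamma>"
proof -
  interpret PW_approximation cantor_measure d \<gamma>
    using assms prob_space_cantor_measure sets_cantor_measure AE_cantor_measure_unit
    by (intro PW_approximation.intro)
  show ?thesis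
    using approx_in_PW weak_conv_approx singular_approx[OF cantor_set_null emeasure_cantor_measure_compl]
      no_atoms_approx[OF emeasure_cantor_measure_singleton] by blast
qed

lemma PW_abs_cont_approximation:
  assumes "2 \<le> d" "\<gamma> \<in> PW d"
  shows "\<exists>\<gamma>3 :: nat \<Rightarrow> real measure. (\<forall>n. \<gamma>3 n \<in> PW d \<and> abs_cont_measure (\<gamma>3 n))
    \<and> weak_conv_halfline \<gamma>3 \<gamma>"
proof -
  let ?U = "uniform_measure lborel {0..1::real}"
  have "AE u in ?U. 0 \<le> u \<and> u \<le> 1"
    by (rule AE_uniform_measureI) auto
  then interpret PW_approximation ?U d \<gamma>
    using assms prob_space_uniform_unit_interval by (intro PW_approximation.intro) simp_all
  have "absolutely_continuous lborel ?U"
    unfolding uniform_measure_def by (rule absolutely_continuousI_density) simp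
  then show ?thesis
    using approx_in_PW weak_conv_approx abs_cont_approx by blast
qed

theorem theoremB2:
  fixes d :: nat and \<gamma> :: "real measure"
  assumes "d \<ge> 3" and "\<gamma> \<in> PW d"
  shows "(\<exists>\<gamma>1 :: nat \<Rightarrow> real measure. (\<forall>n. \<gamma>1 n \<in> PW d \<and> discrete_measure (\<gamma>1 n))
            \<and> weak_conv_halfline \<gamma>1 \<gamma>)
       \<and> (\<exists>\<gamma>2 :: nat \<Rightarrow> real measure. (\<forall>n. \<gamma>2 n \<in> PW d \<and> singular_measure (\<gamma>2 n) \<and> no_atoms (\<gamma>2 n))
            \<and> weak_conv_halfline \<gamma>2 \<gamma>)
       \<and> (\<exists>\<gamma>3 :: nat \<Rightarrow> real measure. (\<forall>n. \<gamma>3 n \<in> PW d \<and> abs_cont_measure (\<gamma>3 n))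
            \<and> weak_conv_halfline \<gamma>3 \<gamma>)"
proof -
  have "2 \<le> d" using assms(1) by simp
  with assms(2) show ?thesis
    using PW_discrete_approximation PW_singular_approximation PW_abs_cont_approximation by blast
qed

end
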